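(* There exists a simple temporal graph $\mathcal G$ whose non-strict-journey reachability graph is not isomorphic to the reachability graph of any happy temporal graph $\mathcal H$. (For instance, $\mathcal G$ on vertices $a,b,c,d,e$ with edges $ac,ad$ labeled $1$, $bc,de$ labeled $2$, and $cd$ labeled $3$.)
   Context: A temporal graph is a triple $\mathcal G=(V,E,\lambda)$ where $V$ is a finite vertex set, $E$ is a set of undirected edges on $V$, and $\lambda:E\to 2^{\mathbb N}\setminus\{\emptyset\}$ assigns to each edge a nonempty set of presence times. The footprint of $\mathcal G$ is the static graph $(V,E)$. A contact is a pair $(e,t)$ with $e\in E$ and $t\in\lambda(e)$. A journey from $u$ to $v$ is a sequence of contacts $(e_1,t_1),\dots,(e_k,t_k)$, $k\ge 1$, such that $e_1,\dots,e_k$ form a path from $u$ to $v$ in the footprint and $t_1\le t_2\le\dots\le t_k$ (a non-strict journey); it is strict if $t_1<t_2<\dots<t_k$. $\mathcal G$ is proper if $\lambda(e)\cap\lambda(e')=\emptyset$ for any two distinct edges $e,e'$ sharing an endpoint (in a proper graph every journey is strict); simple if $|\lambda(e)|=1$ for every edge $e$; happy if it is both proper and simple. The reachability graph $\mathcal C(\mathcal G)$ (with respect to a chosen journey notion) is the directed graph on $V$ having an arc $(u,v)$, $u\neq v$, if and only if there is a journey from $u$ to $v$. Reachability graphs are compared up to isomorphism of directed graphs. *)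

theory Defs
  imports Main
begin

definition temporal_graph :: "'a set \<Rightarrow> 'a set set \<Rightarrow> ('a set \<Rightarrow> nat set) \<Rightarrow> bool" where
  "temporal_graph V E lam \<longleftrightarrow> finite V \<and>
     (\<forall>e\<in>E. \<exists>u v. u \<noteq> v \<and> u \<in> V \<and> v \<in> V \<and> e = {u, v}) \<and>
     (\<forall>e\<in>E. lam e \<noteq> {})"

definition proper :: "'a set set \<Rightarrow> ('a set \<Rightarrow> nat set) \<Rightarrow> bool" where
  "proper E lam \<longleftrightarrow> (\<forall>e\<in>E. \<forall>e'\<in>E. e \<noteq> e' \<and> e \<inter> e' \<noteq> {} \<longrightarrow> lam e \<inter> lam e' = {})"

definition simple_tg :: "'a set set \<Rightarrow> ('a set \<Rightarrow> nat set) \<Rightarrow> bool" where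
  "simple_tg E lam \<longleftrightarrow> (\<forall>e\<in>E. card (lam e) = 1)"

definition happy :: "'a set set \<Rightarrow> ('a set \<Rightarrow> nat set) \<Rightarrow> bool" where
  "happy E lam \<longleftrightarrow> proper E lam \<and> simple_tg E lam"

definition journey :: "bool \<Rightarrow> 'a set set \<Rightarrow> ('a set \<Rightarrow> nat set) \<Rightarrow> 'a \<Rightarrow> 'a \<Rightarrow> 'a list \<Rightarrow> nat list \<Rightarrow> bool" where
  "journey strict E lam u v vs ts \<longleftrightarrow>
     length vs \<ge> 2 \<and> length ts = length vs - 1 \<and>
     hd vs = u \<and> last vs = v \<and> distinct vs \<and>
     (\<forall>i < length ts. {vs ! i, vs ! Suc i} \<in> E \<and> ts ! i \<in> lam {vs ! i, vs ! Suc i}) \<and>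
     (if strict then sorted_wrt (<) ts else sorted ts)"

definition reach_arcs :: "bool \<Rightarrow> 'a set \<Rightarrow> 'a set set \<Rightarrow> ('a set \<Rightarrow> nat set) \<Rightarrow> ('a \<times> 'a) set" where
  "reach_arcs strict V E lam =
     {(u, v). u \<in> V \<and> v \<in> V \<and> u \<noteq> v \<and> (\<exists>vs ts. journey strict E lam u v vs ts)}"

definition digraph_iso :: "'a set \<Rightarrow> ('a \<times> 'a) set \<Rightarrow> 'b set \<Rightarrow> ('b \<times> 'b) set \<Rightarrow> bool" where
  "digraph_iso V1 A1 V2 A2 \<longleftrightarrow>
     (\<exists>f. bij_betw f V1 V2 \<and> (\<forall>u\<in>V1. \<forall>v\<in>V1. (u, v) \<in> A1 \<longleftrightarrow> (f u, f v) \<in> A2))"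

end

theory Submission
  imports Defs
begin

text \<open>With non-strict journeys, \<open>b\<close> and
\<open>e\<close> both reach and are reached by \<open>c\<close> and \<open>d\<close>, yet neither reaches \<open>a\<close> or the other.
Suppose a happy graph realised this reachability graph. Every neighbour of \<open>a\<close>, \<open>b\<close> or
\<open>e\<close> is then \<open>c\<close> or \<open>d\<close>, and \<open>b\<close>, \<open>e\<close> have no common neighbour \<open>w\<close>, since the two
distinct labels on \<open>bw\<close>, \<open>we\<close> give a strict journey in one direction. Up to swapping
\<open>c\<close> and \<open>d\<close>, \<open>b\<close> is adjacent only to \<open>c\<close> and \<open>e\<close> only to \<open>d\<close>. Following the
journeys \<open>b \<leadsto> d\<close> and \<open>d \<leadsto> b\<close> backwards edge by edge forces
\<open>\<lambda>(ad) < \<lambda>(ac)\<close>; the same argument with \<open>b, c\<close> and \<open>e, d\<close> exchanged forces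
\<open>\<lambda>(ac) < \<lambda>(ad)\<close>.\<close>

lemma journey_reach_arc:
  "journey st E lam u v vs ts \<Longrightarrow> u \<in> V \<Longrightarrow> v \<in> V \<Longrightarrow> u \<noteq> v \<Longrightarrow> (u, v) \<in> reach_arcs st V E lam"
  unfolding reach_arcs_def by blast

definition arrives :: "bool \<Rightarrow> 'a set set \<Rightarrow> ('a set \<Rightarrow> nat set) \<Rightarrow> 'a \<Rightarrow> 'a \<Rightarrow> nat \<Rightarrow> bool" where
  "arrives st E lam u v t \<longleftrightarrow> (\<exists>vs ts. journey st E lam u v vs ts \<and> last ts = t)"

lemma arrives_reach_arc:
  "arrives st E lam u v t \<Longrightarrow> u \<in> V \<Longrightarrow> v \<in> V \<Longrightarrow> u \<noteq> v \<Longrightarrow> (u, v) \<in> reach_arcs st V E lam"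
  unfolding reach_arcs_def arrives_def by blast

lemma reach_arc_arrives:
  assumes "(u, v) \<in> reach_arcs st V E lam"
  obtains t where "arrives st E lam u v t"
  using assms unfolding reach_arcs_def arrives_def by blast

lemma arrives_last_edge:
  assumes "arrives st E lam u v t"
  obtains w where "{w, v} \<in> E" "t \<in> lam {w, v}"
    "w = u \<or> (\<exists>t'. (if st then t' < t else t' \<le> t) \<and> arrives st E lam u w t')"
proof -
  obtain vs ts where J: "journey st E lam u v vs ts" and t: "last ts = t"
    using assms unfolding arrives_def by blast
  define n where "n = length ts"
  have len: "n \<ge> 1" "length vs = Suc n" and hd: "hd vs = u" and last: "last vs = v"
    and dist: "distinct vs"
    and edges: "\<And>i. i < n \<Longrightarrow> {vs ! i, vs ! Suc i} \<in> E \<and> ts ! i \<in> lam {vs ! i, vs ! Suc i}"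
    and sorted: "sorted_wrt (if st then (<) else (\<le>)) ts"
    using J unfolding journey_def n_def by (auto split: if_splits)
  define w where "w = vs ! (n - 1)"
  have "vs \<noteq> []" "ts \<noteq> []"
    using len by (auto simp: n_def)
  then have v: "vs ! n = v" and tn: "ts ! (n - 1) = t"
    using len last t by (simp_all add: last_conv_nth n_def)
  have edge: "{w, v} \<in> E" "t \<in> lam {w, v}"
    using edges[of "n - 1"] len v tn by (simp_all add: w_def)
  show thesis
  proof (cases "n = 1")
    case True
    then have "w = u" using hd \<open>vs \<noteq> []\<close> by (simp add: w_def hd_conv_nth)
    then show thesis using that edge by blast
  next
    case False
    then obtain m where m: "n = Suc (Suc m)"
      using len by (metis One_nat_def Suc_le_D not0_implies_Suc)
    let ?vs = "take (Suc (Suc m)) vs" and ?ts = "take (Suc m) ts"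
    have "hd ?vs = u" "last ?vs = w" "last ?ts = ts ! m"
      using len hd m \<open>vs \<noteq> []\<close> \<open>ts \<noteq> []\<close> by (simp_all add: w_def last_conv_nth n_def)
    then have "journey st E lam u w ?vs ?ts"
      unfolding journey_def
      using len m dist edges sorted by (auto simp: n_def split: if_splits)
    then have "arrives st E lam u w (ts ! m)"
      using \<open>last ?ts = ts ! m\<close> unfolding arrives_def by blast
    moreover have "if st then ts ! m < t else ts ! m \<le> t"
      using sorted_wrt_nth_less[OF sorted, of m "Suc m"] len m tn by (simp add: n_def split: if_splits)
    ultimately show thesis
      using that edge by blast
  qed
qed

lemma journey_arrival_in_forward_closed_set:
  assumes J: "journey st E lam u v vs ts"
    and start: "\<And>w t. {u, w} \<in> E \<Longrightarrow> t \<in> lam {u, w} \<Longrightarrow> (w, t) \<in> R"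
    and step: "\<And>w t x t'. (w, t) \<in> R \<Longrightarrow> {w, x} \<in> E \<Longrightarrow> t' \<in> lam {w, x} \<Longrightarrow> t \<le> t'
      \<Longrightarrow> (x, t') \<in> R"
  shows "(v, last ts) \<in> R"
proof -
  have len: "length ts \<ge> 1" "length vs = Suc (length ts)" and hd: "hd vs = u"
    and last: "last vs = v"
    and edges: "\<And>i. i < length ts \<Longrightarrow> {vs ! i, vs ! Suc i} \<in> E \<and> ts ! i \<in> lam {vs ! i, vs ! Suc i}"
    and sorted: "sorted_wrt (if st then (<) else (\<le>)) ts"
    using J unfolding journey_def by (auto split: if_splits)
  have ne: "vs \<noteq> []" "ts \<noteq> []"
    using len by auto
  have "(vs ! Suc i, ts ! i) \<in> R" if "i < length ts" for i
    using that
  proof (induction i)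
    case 0
    then show ?case
      using start edges[of 0] hd ne by (simp add: hd_conv_nth)
  next
    case (Suc i)
    have "ts ! i \<le> ts ! Suc i"
      using sorted_wrt_nth_less[OF sorted, of i "Suc i"] Suc.prems by (auto split: if_splits)
    then show ?case
      using step Suc edges[of "Suc i"] by auto
  qed
  from this[of "length ts - 1"] show ?thesis
    using len last ne by (simp add: last_conv_nth)
qed

lemma reach_arc_target_in_forward_closed_set:
  assumes "(u, v) \<in> reach_arcs st V E lam"
    and "\<And>w t. {u, w} \<in> E \<Longrightarrow> t \<in> lam {u, w} \<Longrightarrow> (w, t) \<in> R"
    and "\<And>w t x t'. (w, t) \<in> R \<Longrightarrow> {w, x} \<in> E \<Longrightarrow> t' \<in> lam {w, x} \<Longrightarrow> t \<le> t'
      \<Longrightarrow> (x, t') \<in> R"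
  shows "v \<in> fst ` R"
proof -
  obtain vs ts where "journey st E lam u v vs ts"
    using assms(1) unfolding reach_arcs_def by blast
  then have "(v, last ts) \<in> R"
    using assms(2,3) by (rule journey_arrival_in_forward_closed_set)
  then show ?thesis
    by force
qed

lemma edge_endpoints:
  assumes "temporal_graph V E lam" "{x, y} \<in> E"
  shows "x \<noteq> y" "x \<in> V" "y \<in> V"
proof -
  have "\<forall>e\<in>E. \<exists>u v. u \<noteq> v \<and> u \<in> V \<and> v \<in> V \<and> e = {u, v}"
    using assms(1) unfolding temporal_graph_def by simp
  then obtain u v where "u \<noteq> v" "u \<in> V" "v \<in> V" "{x, y} = {u, v}"
    using assms(2) by meson
  then show "x \<noteq> y" "x \<in> V" "y \<in> V"
    by (auto simp: doubleton_eq_iff)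
qed

lemma edge_time_exists:
  assumes "temporal_graph V E lam" "e \<in> E"
  obtains t where "t \<in> lam e"
  using assms unfolding temporal_graph_def by auto

lemma edge_reach_arc:
  assumes "temporal_graph V E lam" "{x, y} \<in> E"
  shows "(x, y) \<in> reach_arcs st V E lam"
proof -
  obtain t where "t \<in> lam {x, y}"
    using assms by (rule edge_time_exists)
  then have "journey st E lam x y [x, y] [t]"
    using assms edge_endpoints[OF assms] unfolding journey_def by simp
  then show ?thesis
    using edge_endpoints[OF assms] by (simp add: journey_reach_arc)
qed

lemma reach_arc_first_edge:
  assumes "(u, v) \<in> reach_arcs st V E lam"
  obtains y where "{u, y} \<in> E"
proof -
  obtain vs ts where "journey st E lam u v vs ts"
    using assms unfolding reach_arcs_def by blast
  then have "{vs ! 0, vs ! Suc 0} \<in> E" "hd vs = u" "vs \<noteq> []"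
    unfolding journey_def by auto
  then show thesis
    using that by (auto simp: hd_conv_nth)
qed

lemma proper_two_hop_reach_arc:
  assumes "temporal_graph V E lam" "proper E lam" "{x, y} \<in> E" "{y, z} \<in> E" "x \<noteq> z"
  shows "(x, z) \<in> reach_arcs True V E lam \<or> (z, x) \<in> reach_arcs True V E lam"
proof -
  obtain s t where s: "s \<in> lam {x, y}" and t: "t \<in> lam {y, z}"
    using assms(1,3,4) by (metis edge_time_exists)
  have "{x, y} \<noteq> {y, z}"
    using assms(5) by (auto simp: doubleton_eq_iff)
  then have "lam {x, y} \<inter> lam {y, z} = {}"
    using assms(2)[unfolded proper_def, rule_format, OF assms(3,4)] by blast
  then have "s \<noteq> t"
    using s t by blast
  have V: "x \<in> V" "y \<in> V" "z \<in> V" "x \<noteq> y" "y \<noteq> z"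
    using edge_endpoints[OF assms(1,3)] edge_endpoints[OF assms(1,4)] by auto
  show ?thesis
  proof (cases "s < t")
    case True
    then have "journey True E lam x z [x, y, z] [s, t]"
      using assms(3-5) V s t unfolding journey_def by (auto simp: less_Suc_eq nth_Cons')
    then show ?thesis
      using V assms(5) by (simp add: journey_reach_arc)
  next
    case False
    then have "journey True E lam z x [z, y, x] [t, s]"
      using assms(3-5) V s t \<open>s \<noteq> t\<close> unfolding journey_def
      by (auto simp: less_Suc_eq nth_Cons' insert_commute)
    then show ?thesis
      using V assms(5) by (simp add: journey_reach_arc)
  qed
qed

lemma simple_tg_time:
  assumes "simple_tg E lam" "e \<in> E"
  shows "t \<in> lam e \<longleftrightarrow> t = the_elem (lam e)"
proof -
  obtain s where "lam e = {s}"
    using assms unfolding simple_tg_def by (auto simp: card_1_singleton_iff)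
  then show ?thesis
    by simp
qed

text \<open>The
list is invariant under exchanging \<open>c, d\<close>, and under exchanging both \<open>b, e\<close> and \<open>c, d\<close>.\<close>

locale happy_reach_pattern =
  fixes W :: "'a set" and F :: "'a set set" and mu :: "'a set \<Rightarrow> nat set" and a b c d e :: 'a
  assumes temporal_graph: "temporal_graph W F mu" and happy: "happy F mu"
    and vertices: "W = {a, b, c, d, e}" and distinct: "distinct [a, b, c, d, e]"
    and arc_bc: "(b, c) \<in> reach_arcs True W F mu" and arc_bd: "(b, d) \<in> reach_arcs True W F mu"
    and arc_ec: "(e, c) \<in> reach_arcs True W F mu" and arc_ed: "(e, d) \<in> reach_arcs True W F mu"
    and arc_cb: "(c, b) \<in> reach_arcs True W F mu" and arc_db: "(d, b) \<in> reach_arcs True W F mu"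
    and arc_ce: "(c, e) \<in> reach_arcs True W F mu" and arc_de: "(d, e) \<in> reach_arcs True W F mu"
    and non_arcs:
      "(b, a) \<notin> reach_arcs True W F mu" "(b, e) \<notin> reach_arcs True W F mu"
      "(e, a) \<notin> reach_arcs True W F mu" "(e, b) \<notin> reach_arcs True W F mu"
begin

abbreviation arc :: "'a \<Rightarrow> 'a \<Rightarrow> bool" where
  "arc x y \<equiv> (x, y) \<in> reach_arcs True W F mu"

abbreviation time :: "'a \<Rightarrow> 'a \<Rightarrow> nat" where
  "time x y \<equiv> the_elem (mu {x, y})"

lemma time_commute: "time x y = time y x"
  by (simp add: insert_commute)

lemma arrives_last_contact:
  assumes "arrives True F mu u v t" "u \<in> W"
  obtains w where "{w, v} \<in> F" "t = time w v"
    "w = u \<or> (arc u w \<and> (\<exists>t' < t. arrives True F mu u w t'))"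
proof -
  obtain w where w: "{w, v} \<in> F" "t \<in> mu {w, v}"
    and prefix: "w = u \<or> (\<exists>t' < t. arrives True F mu u w t')"
    using assms(1) by (rule arrives_last_edge) auto
  have "w \<in> W"
    using edge_endpoints[OF temporal_graph w(1)] by simp
  have "arc u w" if "w \<noteq> u" "arrives True F mu u w t'" for t'
    using that assms(2) \<open>w \<in> W\<close> by (simp add: arrives_reach_arc)
  then have "w = u \<or> (arc u w \<and> (\<exists>t' < t. arrives True F mu u w t'))"
    using prefix by blast
  moreover have "t = time w v"
    using w happy simple_tg_time unfolding happy_def by blast
  ultimately show thesis
    using that w(1) by blast
qed

lemma arc_from_b_or_e:
  assumes "x \<in> {b, e}" "arc x w"
  shows "w = c \<or> w = d"
proof -
  have "w \<in> {a, b, c, d, e}" "w \<noteq> x"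
    using assms(2) vertices unfolding reach_arcs_def by auto
  then show ?thesis
    using assms non_arcs by auto
qed

lemma arc_to_a:
  assumes "arc w a"
  shows "w = c \<or> w = d"
proof -
  have "w \<in> {a, b, c, d, e}" "w \<noteq> a"
    using assms vertices unfolding reach_arcs_def by auto
  then show ?thesis
    using assms non_arcs by auto
qed

text \<open>A journey \<open>b \<leadsto> d\<close> must end with the edge \<open>cd\<close>, and its part \<open>b \<leadsto> c\<close> can only be
the edge \<open>bc\<close>.\<close>

lemma edge_cd_later_than_bc:
  assumes bc: "{b, c} \<in> F" and bd: "{b, d} \<notin> F"
  shows "{c, d} \<in> F" "time b c < time c d"
proof -
  obtain t0 where "arrives True F mu b d t0"
    using arc_bd by (rule reach_arc_arrives)
  then obtain w where w: "{w, d} \<in> F" "t0 = time w d"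
    and prefix: "w = b \<or> (arc b w \<and> (\<exists>t' < t0. arrives True F mu b w t'))"
    using vertices by (elim arrives_last_contact) simp
  have "w \<noteq> b" "w \<noteq> d"
    using w(1) bd edge_endpoints[OF temporal_graph w(1)] by auto
  with prefix have "w = c"
    using arc_from_b_or_e[of b w] by auto
  with w(1) show cd: "{c, d} \<in> F"
    by simp
  obtain t1 where t1: "t1 < time c d" "arrives True F mu b c t1"
    using prefix \<open>w \<noteq> b\<close> \<open>w = c\<close> w(2) by blast
  then obtain w1 where w1: "{w1, c} \<in> F" "t1 = time w1 c"
    and prefix1: "w1 = b \<or> (arc b w1 \<and> (\<exists>t' < t1. arrives True F mu b w1 t'))"
    using vertices by (elim arrives_last_contact) simp
  have "w1 = b"
  proof (rule ccontr)
    assume "w1 \<noteq> b"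
    with prefix1 have "w1 = c \<or> w1 = d"
      using arc_from_b_or_e[of b w1] by auto
    moreover have "w1 \<noteq> c"
      using edge_endpoints[OF temporal_graph w1(1)] by simp
    ultimately show False
      using t1(1) w1(2) time_commute by simp
  qed
  with t1(1) w1(2) show "time b c < time c d"
    by simp
qed

text \<open>A journey \<open>d \<leadsto> b\<close> enters \<open>b\<close> from \<open>c\<close>, hence enters \<open>c\<close> from \<open>a\<close> before \<open>\<lambda>(bc)\<close>,
hence enters \<open>a\<close> from \<open>d\<close> before \<open>\<lambda>(ac)\<close>.\<close>

lemma edge_ad_earlier_than_ac:
  assumes bc: "{b, c} \<in> F" and bd: "{b, d} \<notin> F" and ce: "{c, e} \<notin> F"
  shows "time a d < time a c"
proof -
  have bc_before_cd: "time b c < time c d"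
    using edge_cd_later_than_bc[OF bc bd] by simp
  obtain t0 where "arrives True F mu d b t0"
    using arc_db by (rule reach_arc_arrives)
  then obtain w where w: "{w, b} \<in> F" "t0 = time w b"
    and prefix: "w = d \<or> (arc d w \<and> (\<exists>t' < t0. arrives True F mu d w t'))"
    using vertices by (elim arrives_last_contact) simp
  have "arc b w"
    using edge_reach_arc[OF temporal_graph, of b w] w(1) by (simp add: insert_commute)
  then have "w = c"
    using arc_from_b_or_e[of b w] w(1) bd by (auto simp: insert_commute)
  then obtain t1 where t1: "t1 < time b c" "arrives True F mu d c t1"
    using prefix w(2) distinct time_commute by auto
  then obtain w1 where w1: "{w1, c} \<in> F" "t1 = time w1 c"
    and prefix1: "w1 = d \<or> (arc d w1 \<and> (\<exists>t' < t1. arrives True F mu d w1 t'))"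
    using vertices by (elim arrives_last_contact) simp
  have "w1 \<noteq> d"
    using t1(1) w1(2) bc_before_cd time_commute[of d c] by auto
  moreover have "w1 \<noteq> b" "w1 \<noteq> e" "w1 \<noteq> c" "w1 \<in> W"
    using t1(1) w1 ce edge_endpoints[OF temporal_graph w1(1)] by (auto simp: insert_commute)
  ultimately have "w1 = a"
    using vertices by auto
  with prefix1 \<open>w1 \<noteq> d\<close> w1(2) obtain t2 where t2: "t2 < time a c" "arrives True F mu d a t2"
    using time_commute by auto
  then obtain w2 where w2: "{w2, a} \<in> F" "t2 = time w2 a"
    using vertices by (elim arrives_last_contact) simp
  have "w2 = c \<or> w2 = d"
    using arc_to_a edge_reach_arc[OF temporal_graph w2(1)] by blast
  moreover have "w2 \<noteq> c"
    using t2(1) w2(2) time_commute by auto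
  ultimately show ?thesis
    using t2(1) w2(2) time_commute by auto
qed

lemma swap_c_d: "happy_reach_pattern W F mu a b d c e"
  using temporal_graph happy vertices distinct arc_bc arc_bd arc_ec arc_ed arc_cb arc_db arc_ce arc_de non_arcs
  by unfold_locales (auto simp: insert_commute)

lemma swap_b_e_and_c_d: "happy_reach_pattern W F mu a e d c b"
  using temporal_graph happy vertices distinct arc_bc arc_bd arc_ec arc_ed arc_cb arc_db arc_ce arc_de non_arcs
  by unfold_locales (auto simp: insert_commute)

lemma no_common_neighbour_of_b_e:
  assumes "{b, w} \<in> F" "{e, w} \<in> F"
  shows False
proof -
  have "arc b e \<or> arc e b"
    using proper_two_hop_reach_arc[OF temporal_graph _ assms(1), of e] assms(2) happy distinct
    unfolding happy_def by (simp add: insert_commute)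
  then show False
    using non_arcs by blast
qed

lemma no_edge_b_c: "{b, c} \<notin> F"
proof
  assume bc: "{b, c} \<in> F"
  obtain z where ez: "{e, z} \<in> F"
    using arc_ec by (rule reach_arc_first_edge)
  then have "z = c \<or> z = d"
    using arc_from_b_or_e edge_reach_arc[OF temporal_graph ez] by blast
  with ez have ed: "{e, d} \<in> F"
    using bc no_common_neighbour_of_b_e by blast
  have bd: "{b, d} \<notin> F" and ec: "{e, c} \<notin> F"
    using no_common_neighbour_of_b_e bc ed by blast+
  have "time a d < time a c"
    using edge_ad_earlier_than_ac[OF bc bd] ec by (simp add: insert_commute)
  moreover have "time a c < time a d"
    using happy_reach_pattern.edge_ad_earlier_than_ac[OF swap_b_e_and_c_d ed ec] bd
    by (simp add: insert_commute)
  ultimately show False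
    by simp
qed

lemma inconsistent: False
proof -
  obtain y where b_y: "{b, y} \<in> F"
    using arc_bc by (rule reach_arc_first_edge)
  then have "y = c \<or> y = d"
    using arc_from_b_or_e edge_reach_arc[OF temporal_graph b_y] by blast
  then show False
    using b_y no_edge_b_c happy_reach_pattern.no_edge_b_c[OF swap_c_d] by blast
qed

end

text \<open>The example of the statement, with vertices \<open>a, b, c, d, e\<close> numbered \<open>0, \<dots>, 4\<close>: edges at
\<open>a\<close> have label 1, edges at \<open>b\<close> or \<open>e\<close> label 2, and \<open>cd\<close> label 3.\<close>

definition ex_V :: "nat set" where
  "ex_V = {0, 1, 2, 3, 4}"

definition ex_E :: "nat set set" where
  "ex_E = {{0, 2}, {0, 3}, {1, 2}, {3, 4}, {2, 3}}"

definition ex_lam :: "nat set \<Rightarrow> nat set" where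
  "ex_lam e = {if 0 \<in> e then 1 else if 1 \<in> e \<or> 4 \<in> e then 2 else 3}"

lemma ex_simple: "simple_tg ex_E ex_lam"
  unfolding simple_tg_def ex_lam_def by simp

lemma ex_temporal_graph: "temporal_graph ex_V ex_E ex_lam"
proof -
  have edge: "\<exists>u v. u \<noteq> v \<and> u \<in> ex_V \<and> v \<in> ex_V \<and> {x, y} = {u, v}"
    if "x \<noteq> y" "x \<in> ex_V" "y \<in> ex_V" for x y
    using that by blast
  have "\<forall>e\<in>ex_E. \<exists>u v. u \<noteq> v \<and> u \<in> ex_V \<and> v \<in> ex_V \<and> e = {u, v}"
    unfolding ex_E_def by (simp only: ball_simps) (intro conjI edge; simp add: ex_V_def)
  then show ?thesis
    unfolding temporal_graph_def ex_lam_def by (simp add: ex_V_def)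
qed

lemma ex_edge_iff:
  "{x, y} \<in> ex_E \<longleftrightarrow>
     (x, y) \<in> {(0, 2), (2, 0), (0, 3), (3, 0), (1, 2), (2, 1), (3, 4), (4, 3), (2, 3), (3, 2)}"
  unfolding ex_E_def by (auto simp: doubleton_eq_iff)

lemmas ex_journey_simps =
  journey_def less_Suc_eq numeral_2_eq_2 numeral_3_eq_3 ex_edge_iff ex_lam_def doubleton_eq_iff ex_V_def

lemma ex_arcs:
  "(2, 1) \<in> reach_arcs False ex_V ex_E ex_lam" "(2, 4) \<in> reach_arcs False ex_V ex_E ex_lam"
  "(3, 1) \<in> reach_arcs False ex_V ex_E ex_lam" "(3, 4) \<in> reach_arcs False ex_V ex_E ex_lam"
  "(1, 2) \<in> reach_arcs False ex_V ex_E ex_lam" "(1, 3) \<in> reach_arcs False ex_V ex_E ex_lam"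
  "(4, 2) \<in> reach_arcs False ex_V ex_E ex_lam" "(4, 3) \<in> reach_arcs False ex_V ex_E ex_lam"
proof -
  show "(2, 1) \<in> reach_arcs False ex_V ex_E ex_lam"
    by (rule journey_reach_arc[where vs = "[2, 1]" and ts = "[2]"]) (simp_all add: ex_journey_simps)
  \<comment> \<open>The journeys \<open>c \<leadsto> e\<close> and \<open>d \<leadsto> b\<close> through \<open>a\<close> use two contacts at time 1,
    so they are not strict.\<close>
  show "(2, 4) \<in> reach_arcs False ex_V ex_E ex_lam"
    by (rule journey_reach_arc[where vs = "[2, 0, 3, 4]" and ts = "[1, 1, 2]"]) (simp_all add: ex_journey_simps)
  show "(3, 1) \<in> reach_arcs False ex_V ex_E ex_lam"
    by (rule journey_reach_arc[where vs = "[3, 0, 2, 1]" and ts = "[1, 1, 2]"]) (simp_all add: ex_journey_simps)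
  show "(3, 4) \<in> reach_arcs False ex_V ex_E ex_lam"
    by (rule journey_reach_arc[where vs = "[3, 4]" and ts = "[2]"]) (simp_all add: ex_journey_simps)
  show "(1, 2) \<in> reach_arcs False ex_V ex_E ex_lam"
    by (rule journey_reach_arc[where vs = "[1, 2]" and ts = "[2]"]) (simp_all add: ex_journey_simps)
  show "(1, 3) \<in> reach_arcs False ex_V ex_E ex_lam"
    by (rule journey_reach_arc[where vs = "[1, 2, 3]" and ts = "[2, 3]"]) (simp_all add: ex_journey_simps)
  show "(4, 2) \<in> reach_arcs False ex_V ex_E ex_lam"
    by (rule journey_reach_arc[where vs = "[4, 3, 2]" and ts = "[2, 3]"]) (simp_all add: ex_journey_simps)
  show "(4, 3) \<in> reach_arcs False ex_V ex_E ex_lam"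
    by (rule journey_reach_arc[where vs = "[4, 3]" and ts = "[2]"]) (simp_all add: ex_journey_simps)
qed

lemma ex_contact:
  "{x, y} \<in> ex_E \<Longrightarrow> t \<in> ex_lam {x, y} \<Longrightarrow>
     (x, y, t) \<in> {(0, 2, 1), (2, 0, 1), (0, 3, 1), (3, 0, 1), (1, 2, 2), (2, 1, 2),
                  (3, 4, 2), (4, 3, 2), (2, 3, 3), (3, 2, 3)}"
  unfolding ex_edge_iff by (auto simp: ex_lam_def)

lemma ex_reach_from_1:
  assumes "(1, v) \<in> reach_arcs False ex_V ex_E ex_lam"
  shows "v \<in> {1, 2, 3}"
proof -
  let ?R = "{(1, 2), (2, 2), (2, 3), (3, 3)} :: (nat \<times> nat) set"
  have "v \<in> fst ` ?R"
    using assms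
  proof (rule reach_arc_target_in_forward_closed_set)
    show "(w, t) \<in> ?R" if "{1, w} \<in> ex_E" "t \<in> ex_lam {1, w}" for w t
      using ex_contact[OF that] by clarsimp
    show "(x, t') \<in> ?R" if "(w, t) \<in> ?R" "{w, x} \<in> ex_E" "t' \<in> ex_lam {w, x}" "t \<le> t'" for w t x t'
      using that(1,4) ex_contact[OF that(2,3)] by auto
  qed
  then show ?thesis
    by auto
qed

lemma ex_reach_from_4:
  assumes "(4, v) \<in> reach_arcs False ex_V ex_E ex_lam"
  shows "v \<in> {2, 3, 4}"
proof -
  let ?R = "{(3, 2), (4, 2), (2, 3), (3, 3)} :: (nat \<times> nat) set"
  have "v \<in> fst ` ?R"
    using assms
  proof (rule reach_arc_target_in_forward_closed_set)
    show "(w, t) \<in> ?R" if "{4, w} \<in> ex_E" "t \<in> ex_lam {4, w}" for w t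
      using ex_contact[OF that] by clarsimp
    show "(x, t') \<in> ?R" if "(w, t) \<in> ?R" "{w, x} \<in> ex_E" "t' \<in> ex_lam {w, x}" "t \<le> t'" for w t x t'
      using that(1,4) ex_contact[OF that(2,3)] by auto
  qed
  then show ?thesis
    by auto
qed

lemma ex_non_arcs:
  "(1, 0) \<notin> reach_arcs False ex_V ex_E ex_lam" "(1, 4) \<notin> reach_arcs False ex_V ex_E ex_lam"
  "(4, 0) \<notin> reach_arcs False ex_V ex_E ex_lam" "(4, 1) \<notin> reach_arcs False ex_V ex_E ex_lam"
  using ex_reach_from_1 ex_reach_from_4 by fastforce+

lemma happy_reach_pattern_of_iso:
  assumes "temporal_graph W F mu" "happy F mu"
    and "digraph_iso ex_V (reach_arcs False ex_V ex_E ex_lam) W (reach_arcs True W F mu)"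
  shows "\<exists>f :: nat \<Rightarrow> 'a. happy_reach_pattern W F mu (f 0) (f 1) (f 2) (f 3) (f 4)"
proof -
  obtain f where bij: "bij_betw f ex_V W"
    and iso: "\<And>u v. u \<in> ex_V \<Longrightarrow> v \<in> ex_V \<Longrightarrow>
      (f u, f v) \<in> reach_arcs True W F mu \<longleftrightarrow> (u, v) \<in> reach_arcs False ex_V ex_E ex_lam"
    using assms(3) unfolding digraph_iso_def by blast
  have V: "0 \<in> ex_V" "1 \<in> ex_V" "2 \<in> ex_V" "3 \<in> ex_V" "4 \<in> ex_V"
    by (simp_all add: ex_V_def)
  have W: "W = {f 0, f 1, f 2, f 3, f 4}"
    using bij_betw_imp_surj_on[OF bij] by (simp add: ex_V_def)
  have distinct: "distinct [f 0, f 1, f 2, f 3, f 4]"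
    using bij_betw_imp_inj_on[OF bij] unfolding inj_on_def ex_V_def by auto
  show ?thesis
    by (intro exI[of _ f], unfold_locales;
        (fact W distinct assms(1,2) | simp only: iso V ex_arcs ex_non_arcs not_False_eq_True))
qed

theorem mainTheorem7:
  shows "\<exists>(V :: nat set) E lam. temporal_graph V E lam \<and> simple_tg E lam \<and>
           (\<forall>(W :: 'b set) F mu. temporal_graph W F mu \<and> happy F mu \<longrightarrow>
              \<not> digraph_iso V (reach_arcs False V E lam) W (reach_arcs True W F mu))"
proof (intro exI conjI allI impI notI)
  show "temporal_graph ex_V ex_E ex_lam" "simple_tg ex_E ex_lam"
    by (fact ex_temporal_graph, fact ex_simple)
  fix W :: "'b set" and F mu
  assume "temporal_graph W F mu \<and> happy F mu"
    and "digraph_iso ex_V (reach_arcs False ex_V ex_E ex_lam) W (reach_arcs True W F mu)"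
  then obtain f :: "nat \<Rightarrow> 'b" where "happy_reach_pattern W F mu (f 0) (f 1) (f 2) (f 3) (f 4)"
    using happy_reach_pattern_of_iso by blast
  then show False
    by (rule happy_reach_pattern.inconsistent)
qed

end
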